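(* Let $d\ge1$, $m,c>0$, and let $p,p_*,\hat p',\hat p'_*\in\mathbb{R}^d$ with associated energies $p_0=\sqrt{(mc)^2+|p|^2}$, $p_{0*}=\sqrt{(mc)^2+|p_*|^2}$, $\hat p_0'=\sqrt{(mc)^2+|\hat p'|^2}$, $\hat p_{0*}'=\sqrt{(mc)^2+|\hat p'_*|^2}$ satisfy the conservation laws \[ p+p_*=\hat p'+\hat p'_*\quad\text{and}\quad p_0+p_{0*}=\hat p_0'+\hat p_{0*}'. \] Then there exists $\omega\in S^{d-1}$ such that \[ \hat p'=\frac{p+p_*}{2}+\frac g2\Big(I_d+(\rho-1)\frac{v\otimes v}{|v|^2}\Big)\omega,\qquad \hat p'_*=\frac{p+p_*}{2}-\frac g2\Big(I_d+(\rho-1)\frac{v\otimes v}{|v|^2}\Big)\omega, \] and \[ \hat p_0'=\frac{p_0+p_{0*}}{2}+\frac g2\,\frac{p+p_*}{\sqrt s}\cdot\omega,\qquad \hat p_{0*}'=\frac{p_0+p_{0*}}{2}-\frac g2\,\frac{p+p_*}{\sqrt s}\cdot\omega. \]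
   Context: $s=(p_0+p_{0*})^2-|p+p_*|^2$, $g=\sqrt{|p-p_*|^2-(p_0-p_{0*})^2}$, $v=\frac{p+p_*}{p_0+p_{0*}}$, $\rho=\frac{p_0+p_{0*}}{\sqrt s}$; when $v=0$ (so $\rho=1$) the term $(\rho-1)\frac{v\otimes v}{|v|^2}$ is interpreted as $0$. *)

theory Defs
  imports "HOL-Analysis.Analysis"
begin

definition energy :: "real \<Rightarrow> real \<Rightarrow> 'a::real_normed_vector \<Rightarrow> real" where
  "energy m c p = sqrt ((m*c)^2 + (norm p)^2)"

definition rel_s :: "real \<Rightarrow> real \<Rightarrow> 'a::real_inner \<Rightarrow> 'a \<Rightarrow> real" where
  "rel_s m c p q = (energy m c p + energy m c q)^2 - (norm (p + q))^2"

definition rel_g :: "real \<Rightarrow> real \<Rightarrow> 'a::real_inner \<Rightarrow> 'a \<Rightarrow> real" where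
  "rel_g m c p q = sqrt ((norm (p - q))^2 - (energy m c p - energy m c q)^2)"

definition rel_v :: "real \<Rightarrow> real \<Rightarrow> 'a::real_inner \<Rightarrow> 'a \<Rightarrow> 'a" where
  "rel_v m c p q = (1 / (energy m c p + energy m c q)) *\<^sub>R (p + q)"

definition rel_rho :: "real \<Rightarrow> real \<Rightarrow> 'a::real_inner \<Rightarrow> 'a \<Rightarrow> real" where
  "rel_rho m c p q = (energy m c p + energy m c q) / sqrt (rel_s m c p q)"

definition boost_matrix :: "real \<Rightarrow> real ^ 'n \<Rightarrow> real ^ 'n ^ 'n" where
  "boost_matrix \<rho> v =
     (if v = 0 then mat 1
      else mat 1 + (\<chi> i j. (\<rho> - 1) * (v $ i * v $ j) / (norm v)^2))"

end

theory Submission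
  imports Defs
begin

text \<open>
  Write u = q - (p + p_*)/2 and w = q_0 - (p_0 + p_0*)/2. The quantity
  |p - p_*|^2 - (p_0 - p_0*)^2 = s - 4(mc)^2 depends only on the total energy-momentum, so
  conservation gives g^2 = 4(|u|^2 - w^2); subtracting the two mass-shell relations of the
  outgoing particles gives w = v . u. Because rho^2 (1 - |v|^2) = 1, the boost matrix B_rho is
  inverted by B_(1/rho), which maps u to a vector of length sqrt(|u|^2 - (v . u)^2) = g/2.
  Writing that vector as (g/2) omega with |omega| = 1 yields u = (g/2) B_rho omega, and
  v . B_rho omega = rho (v . omega) turns w = v . u into the energy formula.
\<close>

lemma boost_matrix_mult_vec:
  "boost_matrix r v *v x = x + ((r - 1) / (norm v)^2 * (v \<bullet> x)) *\<^sub>R v"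
proof (cases "v = 0")
  case False
  have "(\<chi> i j. (r - 1) * (v $ i * v $ j) / (norm v)^2) *v x
      = ((r - 1) / (norm v)^2 * (v \<bullet> x)) *\<^sub>R v"
    by (simp add: vec_eq_iff matrix_vector_mult_def inner_vec_def sum_distrib_left
        sum_divide_distrib algebra_simps)
  with False show ?thesis
    by (simp add: boost_matrix_def matrix_vector_mult_add_rdistrib)
qed (simp add: boost_matrix_def)

lemma inner_boost_matrix_mult_vec: "v \<bullet> (boost_matrix r v *v x) = r * (v \<bullet> x)"
  by (cases "v = 0")
    (simp_all add: boost_matrix_mult_vec inner_add_right power2_norm_eq_inner field_simps)

lemma boost_matrix_mult_vec_inverse:
  assumes "r \<noteq> 0"
  shows "boost_matrix r v *v (boost_matrix (1 / r) v *v x) = x"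
proof -
  define a b where "a = (r - 1) / (norm v)^2" and "b = (1 / r - 1) / (norm v)^2"
  have "b + a * (1 / r) = ((1 / r - 1) + (r - 1) * (1 / r)) / (norm v)^2"
    by (simp add: a_def b_def add_divide_distrib)
  also have "\<dots> = 0"
    using assms by (simp add: field_simps)
  finally have coeff: "b + a * (1 / r) = 0" .
  have "boost_matrix r v *v (boost_matrix (1 / r) v *v x)
      = boost_matrix (1 / r) v *v x + (a * (1 / r * (v \<bullet> x))) *\<^sub>R v"
    by (simp only: a_def boost_matrix_mult_vec [of r] inner_boost_matrix_mult_vec)
  also have "\<dots> = x + ((b + a * (1 / r)) * (v \<bullet> x)) *\<^sub>R v"
    by (simp only: b_def boost_matrix_mult_vec [of "1 / r"] distrib_right scaleR_add_left
        add.assoc mult.assoc)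
  also have "\<dots> = x"
    unfolding coeff by simp
  finally show ?thesis .
qed

lemma norm_boost_matrix_mult_vec_sq:
  "(norm (boost_matrix r v *v x))^2 = (norm x)^2 + (r^2 - 1) * (v \<bullet> x)^2 / (norm v)^2"
proof (cases "v = 0")
  case False
  define a where "a = (r - 1) / (norm v)^2"
  have r_eq: "r = a * (norm v)^2 + 1"
    using False by (simp add: a_def)
  have "(norm (x + t *\<^sub>R v))^2 = (norm x)^2 + (2 * t * (v \<bullet> x) + t^2 * (norm v)^2)" for t
    unfolding power2_norm_eq_inner
    by (simp add: inner_add_left inner_add_right inner_commute algebra_simps power2_eq_square)
  moreover have "2 * (a * (v \<bullet> x)) * (v \<bullet> x) + (a * (v \<bullet> x))^2 * (norm v)^2
      = (r + 1) * a * (v \<bullet> x)^2"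
    unfolding r_eq by (simp add: algebra_simps power2_eq_square)
  moreover have "(r + 1) * a * (v \<bullet> x)^2 = (r^2 - 1) * (v \<bullet> x)^2 / (norm v)^2"
    using False unfolding a_def by (simp add: field_simps power2_eq_square)
  ultimately show ?thesis
    by (simp add: boost_matrix_mult_vec a_def [symmetric])
qed (simp add: boost_matrix_def)

lemma norm_boost_matrix_inverse_sq:
  assumes "r^2 * (1 - (norm v)^2) = 1"
  shows "(norm (boost_matrix (1 / r) v *v x))^2 = (norm x)^2 - (v \<bullet> x)^2"
proof (cases "v = 0")
  case False
  from assms have "r \<noteq> 0"
    by auto
  then have "(1 / r)^2 = (1 / r)^2 * (r^2 * (1 - (norm v)^2))"
    using assms by simp
  also have "\<dots> = 1 - (norm v)^2"
    using \<open>r \<noteq> 0\<close> by (simp add: power_divide)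
  finally have "(1 / r)^2 - 1 = - ((norm v)^2)"
    by simp
  with False show ?thesis
    by (simp add: norm_boost_matrix_mult_vec_sq)
qed (simp add: boost_matrix_def)

lemma energy_sq: "(energy m c p)^2 = (m * c)^2 + (norm p)^2"
  by (simp add: energy_def)

lemma energy_nonneg: "0 \<le> energy m c p"
  by (simp add: energy_def)

lemma norm_less_energy:
  assumes "m * c \<noteq> 0"
  shows "norm p < energy m c p"
proof -
  have "sqrt ((norm p)^2) < sqrt ((m * c)^2 + (norm p)^2)"
    using assms by (intro real_sqrt_less_mono) simp
  then show ?thesis
    by (simp add: energy_def)
qed

lemma energy_diff_mult_sum:
  "(energy m c p - energy m c q) * (energy m c p + energy m c q) = (p - q) \<bullet> (p + q)"
  using energy_sq [of m c p, unfolded power2_norm_eq_inner]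
    energy_sq [of m c q, unfolded power2_norm_eq_inner]
  by (simp add: power2_norm_eq_inner inner_diff_left inner_add_right inner_commute
      algebra_simps power2_eq_square)

lemma norm_diff_sq_minus_energy_diff_sq:
  "(norm (p - q))^2 - (energy m c p - energy m c q)^2 = rel_s m c p q - 4 * (m * c)^2"
proof -
  have "(norm (p - q))^2 = (norm p)^2 + (norm q)^2 - 2 * (p \<bullet> q)"
    and "(norm (p + q))^2 = (norm p)^2 + (norm q)^2 + 2 * (p \<bullet> q)"
    unfolding power2_norm_eq_inner
    by (simp_all add: inner_diff_left inner_diff_right inner_add_left inner_add_right inner_commute)
  then show ?thesis
    using energy_sq [of m c p] energy_sq [of m c q]
    unfolding rel_s_def power2_diff power2_sum by linarith
qed

lemma rel_s_pos:
  assumes "m * c \<noteq> 0"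
  shows "0 < rel_s m c p q"
proof -
  have "norm (p + q) < energy m c p + energy m c q"
    using norm_less_energy [OF assms, of p] norm_less_energy [OF assms, of q]
      norm_triangle_ineq [of p q] by linarith
  then show ?thesis
    unfolding rel_s_def by (simp add: power_strict_mono)
qed

lemma rel_s_energy_pos:
  assumes "0 < rel_s m c p q"
  shows "0 < energy m c p + energy m c q"
proof -
  have "energy m c p + energy m c q \<noteq> 0"
    using assms by (auto simp: rel_s_def)
  then show ?thesis
    using energy_nonneg [of m c p] energy_nonneg [of m c q] by linarith
qed

lemma rel_rho_sq_lorentz:
  assumes "0 < rel_s m c p q"
  shows "(rel_rho m c p q)^2 * (1 - (norm (rel_v m c p q))^2) = 1"
proof -
  define E where "E = energy m c p + energy m c q"
  have "0 < E" and s_eq: "rel_s m c p q = E^2 - (norm (p + q))^2"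
    using rel_s_energy_pos [OF assms] by (simp_all add: E_def rel_s_def)
  have "(rel_rho m c p q)^2 = E^2 / rel_s m c p q"
    using assms by (simp add: rel_rho_def E_def [symmetric] power_divide)
  moreover have "1 - (norm (rel_v m c p q))^2 = rel_s m c p q / E^2"
    using \<open>0 < E\<close> unfolding rel_v_def E_def [symmetric] norm_scaleR s_eq
    by (simp add: power_divide power_mult_distrib field_simps)
  ultimately show ?thesis
    using assms \<open>0 < E\<close> by simp
qed

lemma scaleR_rel_s_sum:
  assumes "0 < rel_s m c p q"
  shows "(1 / sqrt (rel_s m c p q)) *\<^sub>R (p + q) = rel_rho m c p q *\<^sub>R rel_v m c p q"
  using rel_s_energy_pos [OF assms] by (simp add: rel_rho_def rel_v_def)

lemma collision_invariants:
  fixes p ps q qs :: "'a::real_inner"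
  assumes momentum_cons: "p + ps = q + qs"
    and energy_cons: "energy m c p + energy m c ps = energy m c q + energy m c qs"
  defines "u \<equiv> q - (1/2) *\<^sub>R (p + ps)"
    and "w \<equiv> energy m c q - (energy m c p + energy m c ps) / 2"
  shows "w * (energy m c p + energy m c ps) = u \<bullet> (p + ps)"
    and "(norm (p - ps))^2 - (energy m c p - energy m c ps)^2 = 4 * ((norm u)^2 - w^2)"
proof -
  have q_diff: "q - qs = 2 *\<^sub>R u"
    by (simp add: u_def scaleR_diff_right scaleR_2 momentum_cons)
  have q_energy_diff: "energy m c q - energy m c qs = 2 * w"
    unfolding w_def energy_cons by (simp add: field_simps)
  show "w * (energy m c p + energy m c ps) = u \<bullet> (p + ps)"
    using energy_diff_mult_sum [of m c q qs]
    by (simp add: q_diff q_energy_diff momentum_cons energy_cons)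
  have "rel_s m c p ps = rel_s m c q qs"
    using momentum_cons energy_cons by (simp add: rel_s_def)
  then show "(norm (p - ps))^2 - (energy m c p - energy m c ps)^2 = 4 * ((norm u)^2 - w^2)"
    using norm_diff_sq_minus_energy_diff_sq [of q qs m c]
      norm_diff_sq_minus_energy_diff_sq [of p ps m c]
    by (simp add: q_diff q_energy_diff power_mult_distrib)
qed

lemma exists_unit_scaleR_norm:
  fixes x :: "'a::{real_normed_vector, perfect_space}"
  obtains \<omega> where "norm \<omega> = 1" and "x = norm x *\<^sub>R \<omega>"
proof (cases "x = 0")
  case True
  obtain \<omega> :: 'a where "norm \<omega> = 1"
    using vector_choose_size [of 1] by auto
  with True that show ?thesis
    by simp
next
  case False
  then show ?thesis
    using that [of "sgn x"] by (simp add: norm_sgn sgn_div_norm)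
qed

lemma boost_matrix_unit_decomposition:
  fixes u v :: "real ^ 'n"
  assumes lorentz: "r^2 * (1 - (norm v)^2) = 1"
  obtains \<omega> where "norm \<omega> = 1"
    and "u = sqrt ((norm u)^2 - (v \<bullet> u)^2) *\<^sub>R (boost_matrix r v *v \<omega>)"
    and "v \<bullet> u = r * sqrt ((norm u)^2 - (v \<bullet> u)^2) * (v \<bullet> \<omega>)"
proof -
  define x where "x = boost_matrix (1 / r) v *v u"
  have "r \<noteq> 0"
    using lorentz by auto
  have "(norm x)^2 = (norm u)^2 - (v \<bullet> u)^2"
    using norm_boost_matrix_inverse_sq [OF lorentz, of u] by (simp add: x_def)
  then have norm_x: "sqrt ((norm u)^2 - (v \<bullet> u)^2) = norm x"
    by (rule real_sqrt_unique [OF _ norm_ge_zero])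
  obtain \<omega> where "norm \<omega> = 1" and x_eq: "x = norm x *\<^sub>R \<omega>"
    by (rule exists_unit_scaleR_norm)
  have "norm x *\<^sub>R (boost_matrix r v *v \<omega>) = boost_matrix r v *v x"
    unfolding matrix_vector_mult_scaleR [symmetric] x_eq [symmetric] ..
  also have "\<dots> = u"
    unfolding x_def by (rule boost_matrix_mult_vec_inverse [OF \<open>r \<noteq> 0\<close>])
  finally have u_eq: "u = norm x *\<^sub>R (boost_matrix r v *v \<omega>)" ..
  have "v \<bullet> u = r * (v \<bullet> x)"
    using \<open>r \<noteq> 0\<close> by (simp add: x_def inner_boost_matrix_mult_vec)
  then have vu_eq: "v \<bullet> u = r * norm x * (v \<bullet> \<omega>)"
    using arg_cong [OF x_eq, of "inner v"] by (simp add: mult.assoc)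
  show ?thesis
    by (rule that [unfolded norm_x, OF \<open>norm \<omega> = 1\<close> u_eq vu_eq])
qed

theorem propositionA2:
  fixes m c :: real and p ps q qs :: "real ^ 'n"
  assumes "m > 0" and "c > 0"
    and "p + ps = q + qs"
    and "energy m c p + energy m c ps = energy m c q + energy m c qs"
  shows "\<exists>\<omega> :: real ^ 'n. norm \<omega> = 1 \<and>
     q = (1/2) *\<^sub>R (p + ps) + (rel_g m c p ps / 2) *\<^sub>R
           (boost_matrix (rel_rho m c p ps) (rel_v m c p ps) *v \<omega>) \<and>
     qs = (1/2) *\<^sub>R (p + ps) - (rel_g m c p ps / 2) *\<^sub>R
           (boost_matrix (rel_rho m c p ps) (rel_v m c p ps) *v \<omega>) \<and>
     energy m c q = (energy m c p + energy m c ps) / 2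
        + (rel_g m c p ps / 2) * (((1 / sqrt (rel_s m c p ps)) *\<^sub>R (p + ps)) \<bullet> \<omega>) \<and>
     energy m c qs = (energy m c p + energy m c ps) / 2
        - (rel_g m c p ps / 2) * (((1 / sqrt (rel_s m c p ps)) *\<^sub>R (p + ps)) \<bullet> \<omega>)"
proof -
  define P E where "P = p + ps" and "E = energy m c p + energy m c ps"
  define u w where "u = q - (1/2) *\<^sub>R P" and "w = energy m c q - E / 2"
  define \<rho> v where "\<rho> = rel_rho m c p ps" and "v = rel_v m c p ps"
  have s_pos: "0 < rel_s m c p ps"
    using assms(1,2) by (intro rel_s_pos) simp
  have "0 < E"
    using rel_s_energy_pos [OF s_pos] by (simp add: E_def)
  have lorentz: "\<rho>^2 * (1 - (norm v)^2) = 1"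
    using rel_rho_sq_lorentz [OF s_pos] by (simp add: \<rho>_def v_def)
  have "w * E = u \<bullet> P"
    and rel_momentum: "(norm (p - ps))^2 - (energy m c p - energy m c ps)^2 = 4 * ((norm u)^2 - w^2)"
    using collision_invariants [OF assms(3,4)] by (simp_all add: u_def w_def P_def E_def)
  then have w_eq: "w = v \<bullet> u"
    using \<open>0 < E\<close> by (simp add: v_def rel_v_def flip: E_def P_def) (simp add: field_simps inner_commute)
  have g_eq: "rel_g m c p ps / 2 = sqrt ((norm u)^2 - (v \<bullet> u)^2)"
    unfolding rel_g_def rel_momentum real_sqrt_mult w_eq by simp
  obtain \<omega> where "norm \<omega> = 1" and boost: "u = (rel_g m c p ps / 2) *\<^sub>R (boost_matrix \<rho> v *v \<omega>)"
    and vu_eq: "v \<bullet> u = \<rho> * (rel_g m c p ps / 2) * (v \<bullet> \<omega>)"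
    by (rule boost_matrix_unit_decomposition [OF lorentz, of u, unfolded g_eq [symmetric]])
  have "(1 / sqrt (rel_s m c p ps)) *\<^sub>R P = \<rho> *\<^sub>R v"
    using scaleR_rel_s_sum [OF s_pos] by (simp add: P_def \<rho>_def v_def)
  then have energy: "(rel_g m c p ps / 2) * (((1 / sqrt (rel_s m c p ps)) *\<^sub>R P) \<bullet> \<omega>) = w"
    by (simp add: w_eq vu_eq)
  have "q = (1/2) *\<^sub>R P + u" and "qs = (1/2) *\<^sub>R P - u"
    using assms(3) by (simp_all add: u_def P_def scaleR_add_right)
  moreover have "energy m c q = E / 2 + w" and "energy m c qs = E / 2 - w"
    using assms(4) by (simp_all add: w_def E_def)
  ultimately show ?thesis
    unfolding \<rho>_def [symmetric] v_def [symmetric] P_def [symmetric] E_def [symmetric]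
    using \<open>norm \<omega> = 1\<close> by (intro exI [of _ \<omega>] conjI) (simp_all only: boost [symmetric] energy)
qed

end
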